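(* Let $\mu$ be a probability measure on $\mathbb T^d$, $\varepsilon>0$, and let $\alpha,R>0$ be constants such that $x\mapsto\mathrm{dist}(0_d,x)^2$ is $\alpha$-strongly convex on $B_{\mathbb T^d}(0_d,R)$. Let $x_0\in\mathbb T^d$, $r<R$, $Q=B_{\mathbb T^d}(x_0,r)$, and let $\nu$ be a probability density with $\nu(x)\in[m_\nu,M_\nu]$ for $x\in Q$ ($0<m_\nu\le M_\nu$); set $\nu_Q=\nu1_Q/\nu(Q)$. Let $\gamma_Q(x)=Z_Q^{-1}e^{-\frac1\alpha\mathrm{dist}(x_0,x)^2}1_Q(x)$ with $Z_Q=\int_Qe^{-\frac1\alpha\mathrm{dist}(x_0,x)^2}dx$, and for $\phi\in\mathcal C(\mathbb T^d)$ let $\gamma_Q[\phi](y)=\frac{\gamma_Q(y)e^{\mathcal T^\varepsilon_\mu[\phi](y)}}{\int_Qe^{\mathcal T^\varepsilon_\mu[\phi]}d\gamma_Q}$. Then for every $\phi\in\mathcal C(\mathbb T^d)$ and $y\in Q$, $$m_\nu e^{-\frac{r^2}{\alpha}-4\pi^2d}\cdot\frac{\mathrm{vol}(Q)}{\nu(Q)}\le\frac{\nu_Q(y)}{\gamma_Q[\phi](y)}\le M_\nu e^{\frac{r^2}{\alpha}+4\pi^2d}\cdot\frac{\mathrm{vol}(Q)}{\nu(Q)}.$$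
   Context: $\mathbb T^d=\mathbb R^d/2\pi\mathbb Z^d$ with $\mathrm{dist}(x,y)=\min_{k\in\mathbb Z^d}\|x-y-2\pi k\|$, $B_{\mathbb T^d}(x,r)$ the open ball, $\mathrm{vol}$ Lebesgue measure. $\alpha$-strong convexity on a geodesically convex set is defined along geodesic interpolants: $f(z)\le(1-\lambda)f(x_0)+\lambda f(x_1)-\frac{\alpha\lambda(1-\lambda)}2\mathrm{dist}(x_0,x_1)^2$ whenever $\mathrm{dist}(z,x_0)=\lambda\mathrm{dist}(x_0,x_1)$, $\mathrm{dist}(z,x_1)=(1-\lambda)\mathrm{dist}(x_0,x_1)$. $\mathcal K_\varepsilon(x)=(2\pi\varepsilon)^{-d/2}\sum_{k}e^{-\|x-2\pi k\|^2/(2\varepsilon)}$, $c_\varepsilon(x,y)=-\varepsilon\log\mathcal K_\varepsilon(x-y)$, $\mathcal T^\varepsilon_\mu[\phi](y)=-\varepsilon\log\int e^{(\phi(x)-c_\varepsilon(x,y))/\varepsilon}d\mu(x)$. *)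

theory Defs
  imports "HOL-Analysis.Analysis" "HOL-Probability.Probability"
begin

text \<open>The torus T^d = R^d / 2 pi Z^d is represented by R^d (type real^'n, d = CARD('n));
  points are representatives, functions on the torus are 2 pi Z^d-periodic functions,
  the fundamental cube [0,2 pi)^d is used for Lebesgue integration on the torus.\<close>

definition int_lattice :: "(real^'n) set" where
  "int_lattice = {k. \<forall>i. k $ i \<in> \<int>}"

definition torus_cube :: "(real^'n) set" where
  "torus_cube = {x. \<forall>i. 0 \<le> x $ i \<and> x $ i < 2 * pi}"

definition torus_periodic :: "(real^'n \<Rightarrow> 'b) \<Rightarrow> bool" where
  "torus_periodic f \<longleftrightarrow> (\<forall>x k. k \<in> int_lattice \<longrightarrow> f (x + (2 * pi) *\<^sub>R k) = f x)"

definition tdist :: "real^'n \<Rightarrow> real^'n \<Rightarrow> real" where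
  "tdist x y = Inf {norm (x - y - (2 * pi) *\<^sub>R k) | k. k \<in> int_lattice}"

definition tball :: "real^'n \<Rightarrow> real \<Rightarrow> (real^'n) set" where
  "tball x r = {y \<in> torus_cube. tdist x y < r}"

text \<open>alpha-strong convexity along geodesic interpolants on a set S.\<close>
definition torus_strongly_convex_on :: "(real^'n) set \<Rightarrow> real \<Rightarrow> (real^'n \<Rightarrow> real) \<Rightarrow> bool" where
  "torus_strongly_convex_on S \<alpha> f \<longleftrightarrow>
     (\<forall>x0\<in>S. \<forall>x1\<in>S. \<forall>t::real. \<forall>z\<in>S. 0 \<le> t \<and> t \<le> 1 \<and>
        tdist z x0 = t * tdist x0 x1 \<and> tdist z x1 = (1 - t) * tdist x0 x1 \<longrightarrow>
        f z \<le> (1 - t) * f x0 + t * f x1 - \<alpha> * t * (1 - t) / 2 * (tdist x0 x1)\<^sup>2)"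

definition heat_kernel :: "real \<Rightarrow> real^'n \<Rightarrow> real" where
  "heat_kernel \<epsilon> x = (2 * pi * \<epsilon>) powr (- (real CARD('n) / 2)) *
     infsum (\<lambda>k. exp (- (norm (x - (2 * pi) *\<^sub>R k))\<^sup>2 / (2 * \<epsilon>))) int_lattice"

definition cost_eps :: "real \<Rightarrow> real^'n \<Rightarrow> real^'n \<Rightarrow> real" where
  "cost_eps \<epsilon> x y = - \<epsilon> * ln (heat_kernel \<epsilon> (x - y))"

definition ctrans :: "real \<Rightarrow> (real^'n) measure \<Rightarrow> (real^'n \<Rightarrow> real) \<Rightarrow> real^'n \<Rightarrow> real" where
  "ctrans \<epsilon> \<mu> \<phi> y = - \<epsilon> * ln (\<integral>x. exp ((\<phi> x - cost_eps \<epsilon> x y) / \<epsilon>) \<partial>\<mu>)"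

end

theory Submission
  imports Defs
begin

text \<open>
  With \<open>\<beta> = 1 / (2 \<epsilon>)\<close> the periodic heat kernel factorises into one-dimensional theta
  functions \<open>theta \<beta> t = \<Sum>\<^sub>m exp (- \<beta> (t - 2 pi m)\<^sup>2)\<close>, and uniformly in \<open>\<beta>\<close> one has
  \<open>theta \<beta> t \<le> exp (8 pi\<^sup>2 \<beta>) theta \<beta> s\<close>: for large \<open>\<beta>\<close> because \<open>theta \<beta> t \<le> theta \<beta> s + 1\<close>
  while \<open>theta \<beta> s \<ge> exp (- pi\<^sup>2 \<beta>)\<close>, for small \<open>\<beta>\<close> because \<open>theta \<beta>\<close> is
  \<open>sqrt (2 \<beta>)\<close>-Lipschitz while \<open>theta \<beta> \<ge> 1 / (4 pi sqrt (2 \<beta>))\<close>. Hence the heat kernel varies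
  by a factor at most \<open>exp (4 pi\<^sup>2 d / \<epsilon>)\<close> and the c-transform \<open>T\<close> by at most \<open>4 pi\<^sup>2 d\<close>, while
  on \<open>Q\<close> the weight \<open>G x = exp (- tdist x0 x\<^sup>2 / \<alpha>)\<close> varies by a factor at most \<open>exp (r\<^sup>2 / \<alpha>)\<close>.
  The normalising constant \<open>Z\<^sub>Q\<close> cancels in
  \<open>\<nu>\<^sub>Q y / \<gamma>\<^sub>Q[\<phi>] y = \<nu> y / \<nu>(Q) \<cdot> (\<integral>\<^sub>Q exp T \<cdot> G) / (exp (T y) \<cdot> G y)\<close>, and the last quotient lies
  between \<open>vol(Q) exp (- r\<^sup>2 / \<alpha> - 4 pi\<^sup>2 d)\<close> and \<open>vol(Q) exp (r\<^sup>2 / \<alpha> + 4 pi\<^sup>2 d)\<close>.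
\<close>

section \<open>Gaussian half-lattice sums\<close>

definition gauss :: "real \<Rightarrow> real \<Rightarrow> real" where
  "gauss \<beta> u = exp (- (\<beta> * u\<^sup>2))"

definition half_lattice_sum :: "(real \<Rightarrow> real) \<Rightarrow> real \<Rightarrow> real" where
  "half_lattice_sum F c = (\<Sum>n. F (c + 2 * pi * real n))"

lemma gauss_pos: "0 < gauss \<beta> u"
  by (simp add: gauss_def)

lemma gauss_le_one: "0 \<le> \<beta> \<Longrightarrow> gauss \<beta> u \<le> 1"
  by (simp add: gauss_def)

lemma gauss_minus [simp]: "gauss \<beta> (- u) = gauss \<beta> u"
  by (simp add: gauss_def)

lemma gauss_antimono: "0 \<le> \<beta> \<Longrightarrow> 0 \<le> u \<Longrightarrow> u \<le> v \<Longrightarrow> gauss \<beta> v \<le> gauss \<beta> u"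
  by (simp add: gauss_def mult_left_mono power_mono)

lemma gauss_lattice_le_geometric:
  assumes "0 \<le> \<beta>"
  shows "gauss \<beta> (c + 2 * pi * real n) \<le> exp (\<beta> * (\<bar>c\<bar> + 1)) * exp (- 2 * pi * \<beta>) ^ n"
proof -
  have "2 * pi * real n - \<bar>c\<bar> - 1 \<le> (c + 2 * pi * real n)\<^sup>2"
  proof (cases "2 * pi * real n - \<bar>c\<bar> \<le> 1")
    case False
    then have "2 * pi * real n - \<bar>c\<bar> \<le> (2 * pi * real n - \<bar>c\<bar>)\<^sup>2"
      by (simp add: power2_eq_square)
    also have "\<dots> \<le> (c + 2 * pi * real n)\<^sup>2"
      using False by (intro power_mono) auto
    finally show ?thesis by simp
  qed (use zero_le_power2[of "c + 2 * pi * real n"] in linarith)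
  then have "\<beta> * (2 * pi * real n - \<bar>c\<bar> - 1) \<le> \<beta> * (c + 2 * pi * real n)\<^sup>2"
    using assms by (rule mult_left_mono)
  then have "gauss \<beta> (c + 2 * pi * real n) \<le> exp (\<beta> * (\<bar>c\<bar> + 1) + real n * (- 2 * pi * \<beta>))"
    unfolding gauss_def by (simp add: algebra_simps)
  then show ?thesis
    by (simp only: exp_add exp_of_nat_mult)
qed

lemma summable_gauss_lattice:
  assumes "0 < \<beta>"
  shows "summable (\<lambda>n. gauss \<beta> (c + 2 * pi * real n))"
proof (rule summable_comparison_test)
  show "summable (\<lambda>n. exp (\<beta> * (\<bar>c\<bar> + 1)) * exp (- 2 * pi * \<beta>) ^ n)"
    using assms by (intro summable_mult summable_geometric) simp
  show "\<exists>N. \<forall>n\<ge>N. norm (gauss \<beta> (c + 2 * pi * real n)) \<le> exp (\<beta> * (\<bar>c\<bar> + 1)) * exp (- 2 * pi * \<beta>) ^ n"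
    using assms gauss_pos gauss_lattice_le_geometric by (simp add: abs_of_pos less_imp_le)
qed

lemma half_lattice_sum_shift:
  assumes "summable (\<lambda>n. F (c + 2 * pi * real n))"
  shows "half_lattice_sum F c = F c + half_lattice_sum F (c + 2 * pi)"
  using suminf_split_head[OF assms]
  by (simp add: half_lattice_sum_def algebra_simps)

lemma half_lattice_sum_antimono:
  assumes antimono: "\<And>u v. 0 \<le> u \<Longrightarrow> u \<le> v \<Longrightarrow> F v \<le> F u"
    and "summable (\<lambda>n. F (a + 2 * pi * real n))" "summable (\<lambda>n. F (b + 2 * pi * real n))"
    and "0 \<le> a" "a \<le> b"
  shows "half_lattice_sum F b \<le> half_lattice_sum F a"
  unfolding half_lattice_sum_def using assms by (intro suminf_le antimono) auto

text \<open>For a unimodal \<open>F\<close> with peak at \<open>p\<close>, the terms of the \<open>a\<close>-series before the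
  peak are dominated by the \<open>b\<close>-terms of the same index, those after the peak by the
  \<open>b\<close>-terms of index one less; a single \<open>a\<close>-term is left over.\<close>
lemma half_lattice_sum_unimodal_le:
  fixes F :: "real \<Rightarrow> real"
  assumes nonneg: "\<And>u. 0 \<le> u \<Longrightarrow> 0 \<le> F u" and bounded: "\<And>u. 0 \<le> u \<Longrightarrow> F u \<le> B"
    and mono: "\<And>u v. 0 \<le> u \<Longrightarrow> u \<le> v \<Longrightarrow> v \<le> p \<Longrightarrow> F u \<le> F v"
    and antimono: "\<And>u v. p \<le> u \<Longrightarrow> u \<le> v \<Longrightarrow> F v \<le> F u"
    and summable_a: "summable (\<lambda>n. F (a + 2 * pi * real n))"
    and summable_b: "summable (\<lambda>n. F (b + 2 * pi * real n))"
    and ab: "0 \<le> a" "a \<le> b" "b \<le> a + 2 * pi"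
  shows "half_lattice_sum F a \<le> half_lattice_sum F b + B"
proof -
  define A where "A n = F (a + 2 * pi * real n)" for n
  define B' where "B' n = F (b + 2 * pi * real n)" for n
  obtain n0 :: nat where "(p - b) / (2 * pi) < real n0"
    using reals_Archimedean2 by blast
  then have "p < b + 2 * pi * real n0"
    by (simp add: field_simps)
  define J where "J = (LEAST n. p < b + 2 * pi * real n)"
  have after_peak: "p \<le> b + 2 * pi * real n" if "J \<le> n" for n
  proof -
    have "p < b + 2 * pi * real J"
      unfolding J_def by (rule LeastI) fact
    moreover have "2 * pi * real J \<le> 2 * pi * real n"
      using that by simp
    ultimately show ?thesis
      by linarith
  qed
  have before_peak: "b + 2 * pi * real n \<le> p" if "n < J" for n
    using not_less_Least[OF that[unfolded J_def]] by simp
  have "sum A {..<Suc J} \<le> sum B' {..<J} + B"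
  proof -
    have "sum A {..<J} \<le> sum B' {..<J}"
      unfolding A_def B'_def using ab before_peak by (intro sum_mono mono) auto
    moreover have "A J \<le> B"
      unfolding A_def using ab by (intro bounded) simp
    ultimately show ?thesis by simp
  qed
  moreover have "(\<Sum>n. A (n + Suc J)) \<le> (\<Sum>n. B' (n + J))"
  proof (rule suminf_le)
    show "A (n + Suc J) \<le> B' (n + J)" for n
      unfolding A_def B'_def using ab after_peak[of "n + J"] by (intro antimono) (auto simp: algebra_simps)
    show "summable (\<lambda>n. A (n + Suc J))" "summable (\<lambda>n. B' (n + J))"
      using summable_ignore_initial_segment[OF summable_a] summable_ignore_initial_segment[OF summable_b]
      unfolding A_def B'_def by blast+
  qed
  ultimately show ?thesis
    using suminf_split_initial_segment[OF summable_a, of "Suc J"]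
      suminf_split_initial_segment[OF summable_b, of J]
    unfolding half_lattice_sum_def A_def B'_def by linarith
qed

lemma sum_le_half_lattice_sum_gauss:
  assumes "0 < \<beta>"
  shows "(\<Sum>n<N. gauss \<beta> (c + 2 * pi * real n)) \<le> half_lattice_sum (gauss \<beta>) c"
  unfolding half_lattice_sum_def
  by (intro sum_le_suminf summable_gauss_lattice assms) (auto intro: less_imp_le gauss_pos)

section \<open>The theta function\<close>

definition theta :: "real \<Rightarrow> real \<Rightarrow> real" where
  "theta \<beta> t = (\<Sum>\<^sub>\<infinity>m\<in>\<int>. gauss \<beta> (t - 2 * pi * m))"

lemma Ints_eq_ranges: "\<int> = range (\<lambda>n::nat. - real n) \<union> range (\<lambda>n::nat. real n + 1)"
proof (intro equalityI subsetI)
  fix m :: real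
  assume "m \<in> \<int>"
  then obtain k where k: "m = of_int k"
    by (auto elim: Ints_cases)
  show "m \<in> range (\<lambda>n::nat. - real n) \<union> range (\<lambda>n::nat. real n + 1)"
  proof (cases "k \<le> 0")
    case True
    then have "m = - real (nat (- k))"
      using k by simp
    then show ?thesis by blast
  next
    case False
    then have "m = real (nat (k - 1)) + 1"
      using k by simp
    then show ?thesis by blast
  qed
qed auto

lemma has_sum_theta:
  assumes "0 < \<beta>"
  shows "((\<lambda>m. gauss \<beta> (t - 2 * pi * m)) has_sum
           half_lattice_sum (gauss \<beta>) t + half_lattice_sum (gauss \<beta>) (2 * pi - t)) \<int>"
proof -
  have "((\<lambda>n. gauss \<beta> (c + 2 * pi * real n)) has_sum half_lattice_sum (gauss \<beta>) c) UNIV" for c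
    unfolding half_lattice_sum_def using summable_gauss_lattice[OF assms, of c]
    by (intro sums_nonneg_imp_has_sum summable_sums) (auto intro: less_imp_le gauss_pos)
  moreover have "inj (\<lambda>n::nat. - real n)" "inj (\<lambda>n::nat. real n + 1)"
    by (auto simp: inj_def)
  moreover have "gauss \<beta> (t - 2 * pi * (real n + 1)) = gauss \<beta> (2 * pi - t + 2 * pi * real n)" for n
    by (subst gauss_minus[symmetric]) (simp add: algebra_simps)
  ultimately have "((\<lambda>m. gauss \<beta> (t - 2 * pi * m)) has_sum half_lattice_sum (gauss \<beta>) t)
      (range (\<lambda>n::nat. - real n))"
    and "((\<lambda>m. gauss \<beta> (t - 2 * pi * m)) has_sum half_lattice_sum (gauss \<beta>) (2 * pi - t))
      (range (\<lambda>n::nat. real n + 1))"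
    by (simp_all add: has_sum_reindex o_def)
  moreover have "range (\<lambda>n::nat. - real n) \<inter> range (\<lambda>n::nat. real n + 1) = {}"
    by auto
  ultimately show ?thesis
    unfolding Ints_eq_ranges by (rule has_sum_Un_disjoint)
qed

lemma theta_eq_half_lattice_sums:
  "0 < \<beta> \<Longrightarrow> theta \<beta> t = half_lattice_sum (gauss \<beta>) t + half_lattice_sum (gauss \<beta>) (2 * pi - t)"
  unfolding theta_def by (rule infsumI has_sum_theta)+

lemma theta_add_lattice:
  assumes "m \<in> \<int>"
  shows "theta \<beta> (t + 2 * pi * m) = theta \<beta> t"
proof -
  have "gauss \<beta> (t - 2 * pi * (a - m)) = gauss \<beta> (t + 2 * pi * m - 2 * pi * a)" for a
    by (simp add: algebra_simps)
  then show ?thesis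
    unfolding theta_def using assms
    by (intro infsum_reindex_bij_witness[where j = "\<lambda>a. a - m" and i = "\<lambda>b. b + m"]) auto
qed

lemma theta_minus: "theta \<beta> (- t) = theta \<beta> t"
proof -
  have "gauss \<beta> (- t - 2 * pi * a) = gauss \<beta> (t + 2 * pi * a)" for a
    using gauss_minus[of \<beta> "t + 2 * pi * a"] by (simp add: algebra_simps)
  then show ?thesis
    unfolding theta_def by (intro infsum_reindex_bij_witness[where j = uminus and i = uminus]) auto
qed

lemma theta_reduce: "\<exists>t'. 0 \<le> t' \<and> t' \<le> pi \<and> theta \<beta> t = theta \<beta> t'"
proof -
  define t1 where "t1 = t + 2 * pi * of_int (- \<lfloor>t / (2 * pi)\<rfloor>)"
  have "of_int \<lfloor>t / (2 * pi)\<rfloor> * (2 * pi) \<le> t" "t < (of_int \<lfloor>t / (2 * pi)\<rfloor> + 1) * (2 * pi)"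
    by (simp_all add: floor_divide_lower floor_divide_upper)
  then have t1: "0 \<le> t1" "t1 < 2 * pi"
    unfolding t1_def by (simp_all add: algebra_simps)
  have "theta \<beta> t1 = theta \<beta> t"
    unfolding t1_def by (rule theta_add_lattice) simp
  moreover have "theta \<beta> (2 * pi - t1) = theta \<beta> t1"
    using theta_add_lattice[of 1 \<beta> "- t1"] theta_minus[of \<beta> t1] by simp
  ultimately show ?thesis
  proof (cases "t1 \<le> pi")
    case False
    with t1 show ?thesis
      using \<open>theta \<beta> (2 * pi - t1) = theta \<beta> t1\<close> \<open>theta \<beta> t1 = theta \<beta> t\<close>
      by (intro exI[of _ "2 * pi - t1"]) auto
  qed (use t1 in auto)
qed

lemma gauss_le_theta:
  assumes "0 < \<beta>"
  shows "gauss \<beta> t \<le> theta \<beta> t"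
proof -
  have "0 \<le> half_lattice_sum (gauss \<beta>) (2 * pi - t)"
    using sum_le_half_lattice_sum_gauss[OF assms, of "2 * pi - t" 0] by simp
  then show ?thesis
    using sum_le_half_lattice_sum_gauss[OF assms, of t 1] theta_eq_half_lattice_sums[OF assms] by simp
qed

lemma theta_pos: "0 < \<beta> \<Longrightarrow> 0 < theta \<beta> t"
  using gauss_le_theta[of \<beta> t] gauss_pos[of \<beta> t] by linarith

lemma mult_gauss_le_theta:
  assumes "0 < \<beta>" "0 \<le> s" "s \<le> 2 * pi"
  shows "2 * real N * gauss \<beta> (2 * pi * real N) \<le> theta \<beta> s"
proof -
  have "real N * gauss \<beta> (2 * pi * real N) \<le> half_lattice_sum (gauss \<beta>) c"
    if "0 \<le> c" "c \<le> 2 * pi" for c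
  proof -
    have "real N * gauss \<beta> (2 * pi * real N) = (\<Sum>n<N. gauss \<beta> (2 * pi * real N))"
      by simp
    also have "\<dots> \<le> (\<Sum>n<N. gauss \<beta> (c + 2 * pi * real n))"
    proof (rule sum_mono)
      fix n assume "n \<in> {..<N}"
      then have "2 * pi * (real n + 1) \<le> 2 * pi * real N"
        by (intro mult_left_mono) auto
      then have "c + 2 * pi * real n \<le> 2 * pi * real N"
        using that by (simp add: distrib_left)
      then show "gauss \<beta> (2 * pi * real N) \<le> gauss \<beta> (c + 2 * pi * real n)"
        using assms(1) that by (intro gauss_antimono) auto
    qed
    also have "\<dots> \<le> half_lattice_sum (gauss \<beta>) c"
      by (rule sum_le_half_lattice_sum_gauss[OF assms(1)])
    finally show ?thesis .
  qed
  from this[of s] this[of "2 * pi - s"] show ?thesis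
    using assms by (simp add: theta_eq_half_lattice_sums)
qed


lemma theta_le_add_one:
  assumes "0 < \<beta>" "0 \<le> s" "s \<le> 2 * pi" "0 \<le> t" "t \<le> 2 * pi"
  shows "theta \<beta> t \<le> theta \<beta> s + 1"
proof -
  have summable: "summable (\<lambda>n. gauss \<beta> (c + 2 * pi * real n))" for c
    using assms(1) by (rule summable_gauss_lattice)
  have antimono: "gauss \<beta> v \<le> gauss \<beta> u" if "0 \<le> u" "u \<le> v" for u v
    using assms(1) that by (intro gauss_antimono) auto
  have le: "half_lattice_sum (gauss \<beta>) a \<le> half_lattice_sum (gauss \<beta>) b + 1"
    if "0 \<le> a" "a \<le> b" "b \<le> a + 2 * pi" for a b
  proof (rule half_lattice_sum_unimodal_le[where p = 0, OF _ _ _ _ summable summable that])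
    show "0 \<le> gauss \<beta> u" "gauss \<beta> u \<le> 1" for u
      using assms(1) gauss_pos[of \<beta> u] gauss_le_one[of \<beta> u] by auto
  qed (use antimono in auto)
  have half_antimono: "half_lattice_sum (gauss \<beta>) b \<le> half_lattice_sum (gauss \<beta>) a"
    if "0 \<le> a" "a \<le> b" for a b
    by (rule half_lattice_sum_antimono[OF antimono summable summable that])
  show ?thesis
  proof (cases "t \<le> s")
    case True
    then show ?thesis
      using le[of t s] half_antimono[of "2 * pi - s" "2 * pi - t"] assms
      by (simp add: theta_eq_half_lattice_sums)
  next
    case False
    then show ?thesis
      using le[of "2 * pi - t" "2 * pi - s"] half_antimono[of s t] assms
      by (simp add: theta_eq_half_lattice_sums)
  qed
qed

section \<open>Uniform ratio bound for the theta function\<close>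

definition gauss_slope :: "real \<Rightarrow> real \<Rightarrow> real" where
  "gauss_slope \<beta> u = 2 * \<beta> * u * gauss \<beta> u"

lemma abs_le_exp_half_square: "\<bar>v\<bar> \<le> exp (v\<^sup>2 / 2)" for v :: real
proof -
  have "0 \<le> (\<bar>v\<bar> - 1)\<^sup>2"
    by simp
  then have "\<bar>v\<bar> \<le> 1 + v\<^sup>2 / 2"
    by (simp add: power2_eq_square algebra_simps)
  also have "\<dots> \<le> exp (v\<^sup>2 / 2)"
    by (rule exp_ge_add_one_self)
  finally show ?thesis .
qed

lemma abs_gauss_slope_le:
  assumes "0 < \<beta>"
  shows "\<bar>gauss_slope \<beta> u\<bar> \<le> 2 * sqrt \<beta> * gauss (\<beta> / 2) u"
proof -
  have "sqrt \<beta> * \<bar>u\<bar> \<le> exp (\<beta> * u\<^sup>2 / 2)"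
    using abs_le_exp_half_square[of "sqrt \<beta> * u"] assms by (simp add: power_mult_distrib abs_mult)
  then have "sqrt \<beta> * \<bar>u\<bar> * exp (- (\<beta> * u\<^sup>2 / 2)) \<le> 1"
    by (simp add: exp_minus field_simps)
  moreover have "\<bar>gauss_slope \<beta> u\<bar>
      = 2 * sqrt \<beta> * (sqrt \<beta> * \<bar>u\<bar> * exp (- (\<beta> * u\<^sup>2 / 2))) * exp (- (\<beta> / 2 * u\<^sup>2))"
    using assms by (simp add: gauss_slope_def gauss_def abs_mult flip: exp_add)
  ultimately show ?thesis
    using assms by (simp add: gauss_def mult_left_le)
qed

lemma gauss_slope_le:
  assumes "0 < \<beta>"
  shows "gauss_slope \<beta> u \<le> sqrt (2 * \<beta>)"
proof -
  have "sqrt (2 * \<beta>) * u \<le> \<bar>sqrt (2 * \<beta>) * u\<bar>"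
    by simp
  also have "\<dots> \<le> exp ((sqrt (2 * \<beta>) * u)\<^sup>2 / 2)"
    by (rule abs_le_exp_half_square)
  also have "\<dots> = exp (\<beta> * u\<^sup>2)"
    using assms by (simp add: power_mult_distrib)
  finally have "sqrt (2 * \<beta>) * u * gauss \<beta> u \<le> 1"
    by (simp add: gauss_def exp_minus field_simps)
  then have "sqrt (2 * \<beta>) * (sqrt (2 * \<beta>) * u * gauss \<beta> u) \<le> sqrt (2 * \<beta>)"
    using assms by (simp add: mult_left_le)
  then show ?thesis
    using assms by (simp add: gauss_slope_def algebra_simps)
qed

lemma gauss_slope_nonneg: "0 \<le> \<beta> \<Longrightarrow> 0 \<le> u \<Longrightarrow> 0 \<le> gauss_slope \<beta> u"
  by (simp add: gauss_slope_def gauss_def)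

lemma gauss_slope_has_derivative:
  "(gauss_slope \<beta> has_real_derivative 2 * \<beta> * gauss \<beta> u * (1 - 2 * \<beta> * u\<^sup>2)) (at u)"
  unfolding gauss_slope_def gauss_def
  by (auto intro!: derivative_eq_intros simp: algebra_simps power2_eq_square)

lemma gauss_slope_mono:
  assumes "0 < \<beta>" "0 \<le> u" "u \<le> v" "v \<le> 1 / sqrt (2 * \<beta>)"
  shows "gauss_slope \<beta> u \<le> gauss_slope \<beta> v"
proof (rule deriv_nonneg_imp_mono[OF gauss_slope_has_derivative _ assms(3)])
  fix x assume "x \<in> {u..v}"
  then have "x\<^sup>2 \<le> (1 / sqrt (2 * \<beta>))\<^sup>2"
    using assms by (intro power_mono) auto
  then have "2 * \<beta> * x\<^sup>2 \<le> 1"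
    using assms(1) by (simp add: power_divide field_simps)
  then show "0 \<le> 2 * \<beta> * gauss \<beta> x * (1 - 2 * \<beta> * x\<^sup>2)"
    using assms(1) gauss_pos[of \<beta> x] by simp
qed

lemma gauss_slope_antimono:
  assumes "0 < \<beta>" "1 / sqrt (2 * \<beta>) \<le> u" "u \<le> v"
  shows "gauss_slope \<beta> v \<le> gauss_slope \<beta> u"
proof (rule deriv_nonpos_imp_antimono[OF gauss_slope_has_derivative _ assms(3)])
  fix x assume "x \<in> {u..v}"
  then have "(1 / sqrt (2 * \<beta>))\<^sup>2 \<le> x\<^sup>2"
    using assms by (intro power_mono) auto
  then have "1 \<le> 2 * \<beta> * x\<^sup>2"
    using assms(1) by (simp add: power_divide field_simps)
  then show "2 * \<beta> * gauss \<beta> x * (1 - 2 * \<beta> * x\<^sup>2) \<le> 0"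
    using assms(1) gauss_pos[of \<beta> x] by (simp add: mult_nonneg_nonpos)
qed

lemma summable_gauss_slope_lattice:
  assumes "0 < \<beta>"
  shows "summable (\<lambda>n. gauss_slope \<beta> (c + 2 * pi * real n))"
proof (rule summable_comparison_test)
  show "summable (\<lambda>n. 2 * sqrt \<beta> * gauss (\<beta> / 2) (c + 2 * pi * real n))"
    using assms by (intro summable_mult summable_gauss_lattice) simp
qed (use abs_gauss_slope_le[OF assms] in auto)

lemma gauss_slope_lattice_le_geometric:
  assumes "0 < \<beta>" "\<bar>x\<bar> \<le> K"
  shows "\<bar>gauss_slope \<beta> (x + 2 * pi * real n)\<bar>
           \<le> 2 * sqrt \<beta> * exp (\<beta> / 2 * (K + 1)) * exp (- 2 * pi * (\<beta> / 2)) ^ n"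
proof -
  have "gauss (\<beta> / 2) (x + 2 * pi * real n) \<le> exp (\<beta> / 2 * (\<bar>x\<bar> + 1)) * exp (- 2 * pi * (\<beta> / 2)) ^ n"
    using assms(1) by (intro gauss_lattice_le_geometric) simp
  also have "\<dots> \<le> exp (\<beta> / 2 * (K + 1)) * exp (- 2 * pi * (\<beta> / 2)) ^ n"
    using assms by (intro mult_right_mono) auto
  finally have "2 * sqrt \<beta> * gauss (\<beta> / 2) (x + 2 * pi * real n)
      \<le> 2 * sqrt \<beta> * (exp (\<beta> / 2 * (K + 1)) * exp (- 2 * pi * (\<beta> / 2)) ^ n)"
    using assms(1) by (intro mult_left_mono) simp_all
  then show ?thesis
    using order_trans[OF abs_gauss_slope_le[OF assms(1)]] by (simp add: mult.assoc)
qed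

lemma half_lattice_sum_gauss_has_derivative:
  assumes "0 < \<beta>" "x \<in> {-1<..<2 * pi + 1}"
  shows "(half_lattice_sum (gauss \<beta>) has_field_derivative - half_lattice_sum (gauss_slope \<beta>) x) (at x)"
proof -
  define S where "S = {-1<..<2 * pi + 1}"
  have "norm (- gauss_slope \<beta> (z + 2 * pi * real n))
      \<le> 2 * sqrt \<beta> * exp (\<beta> / 2 * (2 * pi + 2)) * exp (- 2 * pi * (\<beta> / 2)) ^ n" if "z \<in> S" for n z
  proof -
    have "\<bar>z\<bar> \<le> 2 * pi + 1"
      using that pi_gt3 by (auto simp: S_def)
    from gauss_slope_lattice_le_geometric[OF assms(1) this, of n] show ?thesis
      by (simp add: add.assoc)
  qed
  moreover have "summable (\<lambda>n. 2 * sqrt \<beta> * exp (\<beta> / 2 * (2 * pi + 2)) * exp (- 2 * pi * (\<beta> / 2)) ^ n)"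
    using assms(1) by (intro summable_mult summable_geometric) simp
  ultimately have unif: "uniformly_convergent_on S (\<lambda>n z. \<Sum>i<n. - gauss_slope \<beta> (z + 2 * pi * real i))"
    by (rule Weierstrass_m_test')
  have deriv: "((\<lambda>z. gauss \<beta> (z + 2 * pi * real n)) has_field_derivative
      - gauss_slope \<beta> (z + 2 * pi * real n)) (at z within S)" for n z
    unfolding gauss_def gauss_slope_def
    by (auto intro!: derivative_eq_intros simp: algebra_simps power2_eq_square)
  have "convex S" "0 \<in> S" "x \<in> interior S"
    using assms(2) pi_gt3 by (simp_all add: S_def interior_open)
  then have "((\<lambda>z. \<Sum>n. gauss \<beta> (z + 2 * pi * real n)) has_field_derivative
      (\<Sum>n. - gauss_slope \<beta> (x + 2 * pi * real n))) (at x)"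
    using has_field_derivative_series'(2)[OF _ deriv unif _ summable_gauss_lattice[OF assms(1), of 0]]
    by blast
  then show ?thesis
    using suminf_minus[OF summable_gauss_slope_lattice[OF assms(1)]]
    by (simp add: half_lattice_sum_def[abs_def])
qed

lemma half_lattice_sum_gauss_slope_le:
  assumes "0 < \<beta>" "0 \<le> c" "c \<le> 2 * pi" "0 \<le> c'" "c' \<le> 2 * pi"
  shows "half_lattice_sum (gauss_slope \<beta>) c \<le> half_lattice_sum (gauss_slope \<beta>) c' + sqrt (2 * \<beta>)"
proof -
  have le: "half_lattice_sum (gauss_slope \<beta>) a \<le> half_lattice_sum (gauss_slope \<beta>) b + sqrt (2 * \<beta>)"
    if "0 \<le> a" "a \<le> b" "b \<le> a + 2 * pi" for a b
    by (rule half_lattice_sum_unimodal_le[where p = "1 / sqrt (2 * \<beta>)"])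
       (use that assms(1) summable_gauss_slope_lattice gauss_slope_nonneg gauss_slope_le
          gauss_slope_mono gauss_slope_antimono in auto)
  show ?thesis
  proof (cases "c \<le> c'")
    case True
    then show ?thesis
      using assms by (intro le) auto
  next
    case False
    then have "half_lattice_sum (gauss_slope \<beta>) c \<le> half_lattice_sum (gauss_slope \<beta>) (c' + 2 * pi) + sqrt (2 * \<beta>)"
      using assms by (intro le) auto
    moreover have "half_lattice_sum (gauss_slope \<beta>) (c' + 2 * pi) \<le> half_lattice_sum (gauss_slope \<beta>) c'"
      using half_lattice_sum_shift[OF summable_gauss_slope_lattice[OF assms(1)], of c']
        gauss_slope_nonneg[of \<beta> c'] assms by simp
    ultimately show ?thesis
      by simp
  qed
qed

lemma theta_has_derivative:
  assumes "0 < \<beta>" "x \<in> {-1<..<2 * pi + 1}"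
  shows "(theta \<beta> has_field_derivative
           half_lattice_sum (gauss_slope \<beta>) (2 * pi - x) - half_lattice_sum (gauss_slope \<beta>) x) (at x)"
proof -
  have "2 * pi - x \<in> {-1<..<2 * pi + 1}"
    using assms(2) by auto
  then have "((\<lambda>t. half_lattice_sum (gauss \<beta>) (2 * pi - t)) has_field_derivative
      - half_lattice_sum (gauss_slope \<beta>) (2 * pi - x) * - 1) (at x)"
    by (intro DERIV_chain2[OF half_lattice_sum_gauss_has_derivative[OF assms(1)]])
       (auto intro!: derivative_eq_intros)
  then have "((\<lambda>t. half_lattice_sum (gauss \<beta>) t + half_lattice_sum (gauss \<beta>) (2 * pi - t))
      has_field_derivative - half_lattice_sum (gauss_slope \<beta>) x
        + - half_lattice_sum (gauss_slope \<beta>) (2 * pi - x) * - 1) (at x)"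
    by (intro DERIV_add half_lattice_sum_gauss_has_derivative assms)
  moreover have "theta \<beta> = (\<lambda>t. half_lattice_sum (gauss \<beta>) t + half_lattice_sum (gauss \<beta>) (2 * pi - t))"
    using theta_eq_half_lattice_sums[OF assms(1)] by (simp add: fun_eq_iff)
  ultimately show ?thesis
    by simp
qed

lemma theta_lipschitz:
  assumes "0 < \<beta>" "0 \<le> s" "s \<le> 2 * pi" "0 \<le> t" "t \<le> 2 * pi"
  shows "\<bar>theta \<beta> t - theta \<beta> s\<bar> \<le> sqrt (2 * \<beta>) * \<bar>t - s\<bar>"
proof -
  have "norm (theta \<beta> t - theta \<beta> s) \<le> sqrt (2 * \<beta>) * norm (t - s)"
  proof (rule field_differentiable_bound[where S = "{0..2 * pi}"])
    fix z :: real assume z: "z \<in> {0..2 * pi}"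
    then show "(theta \<beta> has_field_derivative
        half_lattice_sum (gauss_slope \<beta>) (2 * pi - z) - half_lattice_sum (gauss_slope \<beta>) z) (at z within {0..2 * pi})"
      using pi_gt3 by (intro has_field_derivative_at_within[OF theta_has_derivative[OF assms(1)]]) auto
    show "norm (half_lattice_sum (gauss_slope \<beta>) (2 * pi - z) - half_lattice_sum (gauss_slope \<beta>) z) \<le> sqrt (2 * \<beta>)"
      using half_lattice_sum_gauss_slope_le[OF assms(1), of z "2 * pi - z"]
        half_lattice_sum_gauss_slope_le[OF assms(1), of "2 * pi - z" z] z by auto
  qed (use assms in auto)
  then show ?thesis
    by simp
qed

lemma theta_le_exp_mult_large:
  assumes "1 \<le> 8 * pi\<^sup>2 * \<beta>" "0 \<le> s" "s \<le> pi" "0 \<le> t" "t \<le> 2 * pi"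
  shows "theta \<beta> t \<le> exp (8 * pi\<^sup>2 * \<beta>) * theta \<beta> s"
proof -
  define z where "z = pi\<^sup>2 * \<beta>"
  have z: "1 / 8 \<le> z"
    unfolding z_def using assms(1) by linarith
  have "0 < 8 * pi\<^sup>2 * \<beta>"
    using assms(1) by linarith
  then have \<beta>: "0 < \<beta>"
    by (simp add: zero_less_mult_iff)
  have "\<beta> * s\<^sup>2 \<le> \<beta> * pi\<^sup>2"
    using assms \<beta> by (intro mult_left_mono power_mono) auto
  then have "exp (- z) \<le> gauss \<beta> s"
    unfolding z_def gauss_def by (simp add: mult.commute)
  then have "exp (- z) \<le> theta \<beta> s"
    using gauss_le_theta[OF \<beta>, of s] by linarith
  then have "1 \<le> exp z * theta \<beta> s"
    by (simp add: exp_minus field_simps)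
  have "2 \<le> exp (7 * z)"
  proof -
    have "(7 / 8)\<^sup>2 / 2 \<le> (7 * z)\<^sup>2 / 2"
      using z by (intro divide_right_mono power_mono) auto
    moreover have "1 + 7 * z + (7 * z)\<^sup>2 / 2 \<le> exp (7 * z)"
      using z by (intro exp_lower_Taylor_quadratic) auto
    ultimately show ?thesis
      using z by (simp add: power2_eq_square)
  qed
  have "theta \<beta> t \<le> theta \<beta> s + 1"
    using assms \<beta> by (intro theta_le_add_one) auto
  also have "\<dots> \<le> (1 + exp z) * theta \<beta> s"
    using \<open>1 \<le> exp z * theta \<beta> s\<close> by (simp add: algebra_simps)
  also have "\<dots> \<le> (2 * exp z) * theta \<beta> s"
    using z theta_pos[OF \<beta>, of s] by (intro mult_right_mono) auto
  also have "\<dots> \<le> (exp (7 * z) * exp z) * theta \<beta> s"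
    using \<open>2 \<le> exp (7 * z)\<close> theta_pos[OF \<beta>, of s] by (intro mult_right_mono) auto
  also have "\<dots> = exp (8 * pi\<^sup>2 * \<beta>) * theta \<beta> s"
    unfolding z_def by (simp flip: exp_add)
  finally show ?thesis .
qed

lemma inverse_sqrt_le_theta:
  assumes "0 < \<beta>" "8 * pi\<^sup>2 * \<beta> < 1" "0 \<le> s" "s \<le> 2 * pi"
  shows "1 / (4 * pi * sqrt (2 * \<beta>)) \<le> theta \<beta> s"
proof -
  define x where "x = 1 / (2 * pi * sqrt (2 * \<beta>))"
  \<comment> \<open>about \<open>x\<close> lattice points on each side of \<open>s\<close> lie where the terms are at least \<open>exp (- 1 / 2)\<close>\<close>
  have "(2 * pi * sqrt (2 * \<beta>))\<^sup>2 < 1"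
    using assms(1,2) by (simp add: power_mult_distrib)
  then have "2 * pi * sqrt (2 * \<beta>) < 1"
    by (rule power2_less_imp_less[where y = 1, simplified])
  then have x: "1 < x"
    unfolding x_def using assms(1) by (simp add: field_simps)
  define N where "N = nat \<lfloor>x\<rfloor>"
  have "real N \<le> x" "x < real N + 1" "1 \<le> real N"
    unfolding N_def using x by (linarith, linarith, simp add: one_le_floor)
  then have N: "real N \<le> x" "x \<le> 2 * real N"
    by linarith+
  have "\<beta> * (2 * pi * real N)\<^sup>2 \<le> \<beta> * (2 * pi * x)\<^sup>2"
    using N x assms(1) by (intro mult_left_mono power_mono) auto
  also have "\<dots> = 1 / 2"
    unfolding x_def using assms(1) by (simp add: power_mult_distrib field_simps)
  finally have "x * exp (- (1 / 2)) \<le> 2 * real N * gauss \<beta> (2 * pi * real N)"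
    using N x unfolding gauss_def by (intro mult_mono) auto
  moreover have "x / 2 \<le> x * exp (- (1 / 2))"
    using exp_half_le2 x by (simp add: exp_minus field_simps)
  ultimately have "x / 2 \<le> theta \<beta> s"
    using mult_gauss_le_theta[OF assms(1,3,4), of N] by linarith
  then show ?thesis
    by (simp add: x_def)
qed

lemma theta_le_exp_mult_small:
  assumes "0 < \<beta>" "8 * pi\<^sup>2 * \<beta> < 1" "0 \<le> s" "s \<le> pi" "0 \<le> t" "t \<le> pi"
  shows "theta \<beta> t \<le> exp (8 * pi\<^sup>2 * \<beta>) * theta \<beta> s"
proof -
  define w where "w = sqrt (2 * \<beta>)"
  have w: "0 < w" "w\<^sup>2 = 2 * \<beta>"
    unfolding w_def using assms(1) by simp_all
  have "pi * w = 4 * pi\<^sup>2 * w\<^sup>2 * (1 / (4 * pi * w))"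
    using w by (simp add: power2_eq_square field_simps)
  also have "\<dots> \<le> (exp (8 * pi\<^sup>2 * \<beta>) - 1) * theta \<beta> s"
  proof (rule mult_mono)
    show "4 * pi\<^sup>2 * w\<^sup>2 \<le> exp (8 * pi\<^sup>2 * \<beta>) - 1"
      using exp_ge_add_one_self[of "8 * pi\<^sup>2 * \<beta>"] w(2) by (simp only: mult.assoc)
    show "1 / (4 * pi * w) \<le> theta \<beta> s"
      unfolding w_def using assms by (intro inverse_sqrt_le_theta) auto
  qed (use w assms(1) in auto)
  moreover have "theta \<beta> t \<le> theta \<beta> s + w * \<bar>t - s\<bar>"
    using theta_lipschitz[OF assms(1), of s t] assms unfolding w_def by auto
  moreover have "w * \<bar>t - s\<bar> \<le> pi * w"
    using assms w by (simp add: mult.commute mult_left_mono)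
  ultimately show ?thesis
    by (simp add: algebra_simps)
qed

lemma theta_le_exp_mult:
  assumes "0 < \<beta>"
  shows "theta \<beta> t \<le> exp (8 * pi\<^sup>2 * \<beta>) * theta \<beta> s"
proof -
  obtain s' t' where "0 \<le> s'" "s' \<le> pi" "theta \<beta> s = theta \<beta> s'"
    and "0 \<le> t'" "t' \<le> pi" "theta \<beta> t = theta \<beta> t'"
    using theta_reduce by metis
  then show ?thesis
    using theta_le_exp_mult_large[of \<beta> s' t'] theta_le_exp_mult_small[OF assms, of s' t'] pi_gt_zero
    by (cases "8 * pi\<^sup>2 * \<beta> < 1") auto
qed

section \<open>The periodic heat kernel\<close>

lemma int_lattice_eq_image_PiE: "(int_lattice :: (real^'n) set) = vec_lambda ` (PiE UNIV (\<lambda>_. \<int>))"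
proof (intro equalityI subsetI)
  fix k :: "real^'n"
  assume "k \<in> int_lattice"
  then have "(\<lambda>i. k $ i) \<in> PiE UNIV (\<lambda>_. \<int>)"
    unfolding int_lattice_def by auto
  then show "k \<in> vec_lambda ` (PiE UNIV (\<lambda>_. \<int>))"
    by (metis image_eqI vec_nth_inverse)
qed (auto simp: int_lattice_def)

lemma heat_kernel_eq_prod_theta:
  fixes x :: "real^'n"
  assumes "0 < \<epsilon>"
  shows "heat_kernel \<epsilon> x =
    (2 * pi * \<epsilon>) powr (- (real CARD('n) / 2)) * (\<Prod>i\<in>UNIV. theta (1 / (2 * \<epsilon>)) (x $ i))"
proof -
  define \<beta> where "\<beta> = 1 / (2 * \<epsilon>)"
  have \<beta>: "0 < \<beta>"
    unfolding \<beta>_def using assms by simp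
  define f where "f i m = gauss \<beta> (x $ i - 2 * pi * m)" for i m
  have term_eq: "exp (- (norm (x - (2 * pi) *\<^sub>R k))\<^sup>2 / (2 * \<epsilon>)) = (\<Prod>i\<in>UNIV. f i (k $ i))"
    for k :: "real^'n"
  proof -
    have "(norm (x - (2 * pi) *\<^sub>R k))\<^sup>2 = (\<Sum>i\<in>UNIV. (x $ i - 2 * pi * k $ i)\<^sup>2)"
      unfolding power2_norm_eq_inner by (simp add: inner_vec_def power2_eq_square)
    then have "- (norm (x - (2 * pi) *\<^sub>R k))\<^sup>2 / (2 * \<epsilon>) = (\<Sum>i\<in>UNIV. - (\<beta> * (x $ i - 2 * pi * k $ i)\<^sup>2))"
      unfolding \<beta>_def by (simp add: sum_divide_distrib sum_negf)
    then show ?thesis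
      unfolding f_def gauss_def by (simp add: exp_sum)
  qed
  have "inj_on (vec_lambda :: ('n \<Rightarrow> real) \<Rightarrow> real^'n) (PiE UNIV (\<lambda>_. \<int>))"
    by (auto simp: inj_on_def vec_lambda_inject)
  then have "infsum (\<lambda>k. exp (- (norm (x - (2 * pi) *\<^sub>R k))\<^sup>2 / (2 * \<epsilon>))) int_lattice
      = infsum (\<lambda>p. \<Prod>i\<in>UNIV. f i (p i)) (PiE UNIV (\<lambda>_. \<int>))"
    unfolding term_eq int_lattice_eq_image_PiE by (simp add: infsum_reindex o_def)
  also have "\<dots> = (\<Prod>i\<in>UNIV. infsum (f i) \<int>)"
  proof (rule infsum_prod_PiE_abs)
    fix i
    have "f i summable_on \<int>"
      unfolding f_def using has_sum_theta[OF \<beta>] by (auto simp: summable_on_def)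
    then show "(\<lambda>m. norm (f i m)) summable_on \<int>"
      using summable_on_iff_abs_summable_on_real by blast
  qed simp
  also have "\<dots> = (\<Prod>i\<in>UNIV. theta \<beta> (x $ i))"
    unfolding f_def theta_def ..
  finally show ?thesis
    unfolding heat_kernel_def \<beta>_def by simp
qed

lemma heat_kernel_pos:
  fixes x :: "real^'n"
  assumes "0 < \<epsilon>"
  shows "0 < heat_kernel \<epsilon> x"
  using assms by (simp add: heat_kernel_eq_prod_theta prod_pos theta_pos)

lemma heat_kernel_le_exp_mult:
  fixes u v :: "real^'n"
  assumes "0 < \<epsilon>"
  shows "heat_kernel \<epsilon> u \<le> exp (4 * pi\<^sup>2 * real CARD('n) / \<epsilon>) * heat_kernel \<epsilon> v"
proof -
  define \<beta> where "\<beta> = 1 / (2 * \<epsilon>)"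
  have \<beta>: "0 < \<beta>"
    unfolding \<beta>_def using assms by simp
  have "(\<Prod>i\<in>UNIV. theta \<beta> (u $ i)) \<le> (\<Prod>i\<in>(UNIV::'n set). exp (8 * pi\<^sup>2 * \<beta>) * theta \<beta> (v $ i))"
    using \<beta> by (intro prod_mono conjI less_imp_le[OF theta_pos] theta_le_exp_mult)
  also have "\<dots> = exp (8 * pi\<^sup>2 * \<beta>) ^ CARD('n) * (\<Prod>i\<in>UNIV. theta \<beta> (v $ i))"
    by (simp add: prod.distrib)
  also have "exp (8 * pi\<^sup>2 * \<beta>) ^ CARD('n) = exp (4 * pi\<^sup>2 * real CARD('n) / \<epsilon>)"
    unfolding \<beta>_def by (simp flip: exp_of_nat_mult)
  finally have "(2 * pi * \<epsilon>) powr (- (real CARD('n) / 2)) * (\<Prod>i\<in>UNIV. theta \<beta> (u $ i))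
      \<le> (2 * pi * \<epsilon>) powr (- (real CARD('n) / 2))
        * (exp (4 * pi\<^sup>2 * real CARD('n) / \<epsilon>) * (\<Prod>i\<in>UNIV. theta \<beta> (v $ i)))"
    by (rule mult_left_mono) simp
  then show ?thesis
    unfolding heat_kernel_eq_prod_theta[OF assms] \<beta>_def by (simp only: mult_ac)
qed

lemma borel_measurable_half_lattice_sum:
  assumes [measurable]: "F \<in> borel_measurable borel"
  shows "half_lattice_sum F \<in> borel_measurable borel"
  unfolding half_lattice_sum_def[abs_def] by measurable

lemma borel_measurable_theta:
  assumes "0 < \<beta>"
  shows "theta \<beta> \<in> borel_measurable borel"
proof -
  have [measurable]: "half_lattice_sum (gauss \<beta>) \<in> borel_measurable borel"
    unfolding gauss_def[abs_def]
    by (intro borel_measurable_half_lattice_sum borel_measurable_continuous_onI continuous_intros)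
  have theta_eq: "theta \<beta> = (\<lambda>t. half_lattice_sum (gauss \<beta>) t + half_lattice_sum (gauss \<beta>) (2 * pi - t))"
    using theta_eq_half_lattice_sums[OF assms] by (simp add: fun_eq_iff)
  show ?thesis
    unfolding theta_eq by measurable
qed

lemma borel_measurable_heat_kernel:
  assumes "0 < \<epsilon>"
  shows "(heat_kernel \<epsilon> :: real^'n \<Rightarrow> real) \<in> borel_measurable borel"
proof -
  have [measurable]: "theta (1 / (2 * \<epsilon>)) \<in> borel_measurable borel"
    using assms by (intro borel_measurable_theta) simp
  have heat_kernel_eq: "heat_kernel \<epsilon> = (\<lambda>x::real^'n. (2 * pi * \<epsilon>) powr (- (real CARD('n) / 2))
      * (\<Prod>i\<in>UNIV. theta (1 / (2 * \<epsilon>)) (x $ i)))"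
    by (rule ext) (rule heat_kernel_eq_prod_theta[OF assms])
  show ?thesis
    unfolding heat_kernel_eq by measurable
qed

section \<open>Distance and balls on the torus\<close>

lemma tdist_le_norm:
  fixes x y k :: "real^'n"
  assumes "k \<in> int_lattice"
  shows "tdist x y \<le> norm (x - y - (2 * pi) *\<^sub>R k)"
  unfolding tdist_def by (rule cInf_lower) (use assms in \<open>auto intro!: bdd_belowI[of _ 0]\<close>)

lemma zero_in_int_lattice: "0 \<in> int_lattice"
  by (simp add: int_lattice_def)

lemma tdist_nonneg: "0 \<le> tdist x y"
  unfolding tdist_def by (rule cInf_greatest) (use zero_in_int_lattice in auto)

lemma tdist_le_add_norm:
  fixes x y z :: "real^'n"
  shows "tdist x y \<le> tdist x z + norm (y - z)"
proof -
  have "tdist x y - norm (y - z) \<le> tdist x z"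
    unfolding tdist_def[of x z]
  proof (rule cInf_greatest)
    fix a assume "a \<in> {norm (x - z - (2 * pi) *\<^sub>R k) |k. k \<in> int_lattice}"
    then obtain k where k: "k \<in> int_lattice" "a = norm (x - z - (2 * pi) *\<^sub>R k)"
      by auto
    have "tdist x y \<le> norm (x - z - (2 * pi) *\<^sub>R k + (z - y))"
      using tdist_le_norm[OF k(1)] by (simp add: algebra_simps)
    also have "\<dots> \<le> a + norm (y - z)"
      using norm_triangle_ineq[of "x - z - (2 * pi) *\<^sub>R k" "z - y"] k(2) by (simp add: norm_minus_commute)
    finally show "tdist x y - norm (y - z) \<le> a"
      by simp
  qed (use zero_in_int_lattice in auto)
  then show ?thesis
    by simp
qed

lemma continuous_on_tdist: "continuous_on UNIV (tdist x)"
proof (rule lipschitz_on_continuous_on)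
  show "1-lipschitz_on UNIV (tdist x)"
  proof (rule lipschitz_onI)
    fix y z
    show "dist (tdist x y) (tdist x z) \<le> 1 * dist y z"
      using tdist_le_add_norm[of x y z] tdist_le_add_norm[of x z y]
      by (simp add: dist_real_def dist_norm norm_minus_commute abs_le_iff)
  qed simp
qed

lemma borel_measurable_tdist [measurable]: "tdist x \<in> borel_measurable borel"
  by (rule borel_measurable_continuous_onI[OF continuous_on_tdist])

lemma tball_in_sets: "tball x r \<in> sets borel"
  unfolding tball_def torus_cube_def by measurable

lemma emeasure_tball_finite: "emeasure lborel (tball (x :: real^'n) r) < \<infinity>"
proof -
  have "tball x r \<subseteq> cbox 0 (\<chi> i. 2 * pi)"
    unfolding tball_def torus_cube_def by (auto simp: mem_box_cart less_imp_le)
  then have "emeasure lborel (tball x r) \<le> emeasure lborel (cbox (0::real^'n) (\<chi> i. 2 * pi))"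
    by (intro emeasure_mono) auto
  also have "\<dots> < \<infinity>"
    by (rule emeasure_lborel_cbox_finite)
  finally show ?thesis .
qed

lemma exp_tdist_tball_le:
  assumes "0 < \<alpha>" "w \<in> tball x0 r"
  shows "exp (- (tdist x0 z)\<^sup>2 / \<alpha>) \<le> exp (r\<^sup>2 / \<alpha>) * exp (- (tdist x0 w)\<^sup>2 / \<alpha>)"
proof -
  have "(tdist x0 w)\<^sup>2 \<le> r\<^sup>2"
    using assms(2) tdist_nonneg[of x0 w] unfolding tball_def by (auto intro: power_mono)
  then have "- (tdist x0 z)\<^sup>2 \<le> r\<^sup>2 + - (tdist x0 w)\<^sup>2"
    using zero_le_power2[of "tdist x0 z"] by linarith
  then have "- (tdist x0 z)\<^sup>2 / \<alpha> \<le> (r\<^sup>2 + - (tdist x0 w)\<^sup>2) / \<alpha>"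
    using assms(1) by (intro divide_right_mono) auto
  then show ?thesis
    unfolding add_divide_distrib by (simp flip: exp_add)
qed

lemma torus_periodic_bounded:
  fixes f :: "real^'n \<Rightarrow> real"
  assumes "continuous_on UNIV f" "torus_periodic f"
  obtains B where "\<And>x. \<bar>f x\<bar> \<le> B"
proof -
  have "compact (f ` cbox 0 (\<chi> i. 2 * pi))"
    using assms(1) by (intro compact_continuous_image compact_cbox) (auto intro: continuous_on_subset)
  then obtain B where B: "\<And>x. x \<in> cbox 0 (\<chi> i. 2 * pi) \<Longrightarrow> \<bar>f x\<bar> \<le> B"
    by (metis bounded_iff compact_imp_bounded image_eqI real_norm_def)
  have "\<bar>f x\<bar> \<le> B" for x
  proof -
    define k :: "real^'n" where "k = (\<chi> i. of_int \<lfloor>x $ i / (2 * pi)\<rfloor>)"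
    have "k \<in> int_lattice"
      unfolding k_def int_lattice_def by auto
    then have "f x = f (x - (2 * pi) *\<^sub>R k)"
      using assms(2) unfolding torus_periodic_def by (metis diff_add_cancel)
    moreover have "x - (2 * pi) *\<^sub>R k \<in> cbox 0 (\<chi> i. 2 * pi)"
      using floor_divide_lower[of "2 * pi" "x $ i" for i] floor_divide_upper[of "2 * pi" "x $ i" for i]
      unfolding k_def by (auto simp: mem_box_cart algebra_simps intro: less_imp_le)
    ultimately show ?thesis
      using B by simp
  qed
  then show ?thesis
    by (rule that)
qed

section \<open>Oscillation of the entropic c-transform\<close>

lemma ctrans_eq_ln_integral:
  assumes "0 < \<epsilon>"
  shows "ctrans \<epsilon> \<mu> \<phi> y = - \<epsilon> * ln (\<integral>x. exp (\<phi> x / \<epsilon>) * heat_kernel \<epsilon> (x - y) \<partial>\<mu>)"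
proof -
  have "exp ((\<phi> x - cost_eps \<epsilon> x y) / \<epsilon>) = exp (\<phi> x / \<epsilon>) * heat_kernel \<epsilon> (x - y)" for x
  proof -
    have "(\<phi> x - cost_eps \<epsilon> x y) / \<epsilon> = \<phi> x / \<epsilon> + ln (heat_kernel \<epsilon> (x - y))"
      using assms by (simp add: cost_eps_def field_simps)
    then show ?thesis
      using heat_kernel_pos[OF assms, of "x - y"] by (simp add: exp_add)
  qed
  then show ?thesis
    by (simp add: ctrans_def)
qed

context
  fixes \<mu> :: "(real^'n) measure" and \<epsilon> B :: real and \<phi> :: "real^'n \<Rightarrow> real"
  assumes prob: "prob_space \<mu>" and sets_eq: "sets \<mu> = sets borel" and eps: "0 < \<epsilon>"
    and borel_\<phi> [measurable]: "\<phi> \<in> borel_measurable borel" and bounded_\<phi>: "\<And>x. \<bar>\<phi> x\<bar> \<le> B"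
begin

interpretation prob_space \<mu>
  by (rule prob)

lemma measurable_ctrans_integrand [measurable]:
  "(\<lambda>(y, x). exp (\<phi> x / \<epsilon>) * heat_kernel \<epsilon> (x - y)) \<in> borel_measurable (borel \<Otimes>\<^sub>M \<mu>)"
proof -
  have [measurable]: "heat_kernel \<epsilon> \<in> borel_measurable borel"
    by (rule borel_measurable_heat_kernel[OF eps])
  have "(\<lambda>(y, x). exp (\<phi> x / \<epsilon>) * heat_kernel \<epsilon> (x - y)) \<in> borel_measurable (borel \<Otimes>\<^sub>M borel)"
    by measurable
  then show ?thesis
    by (simp add: measurable_cong_sets[OF sets_pair_measure_cong[OF refl sets_eq] refl])
qed

lemma ctrans_integrand_bounds:
  "exp (- B / \<epsilon>) * (heat_kernel \<epsilon> (0 :: real^'n) / exp (4 * pi\<^sup>2 * real CARD('n) / \<epsilon>))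
     \<le> exp (\<phi> x / \<epsilon>) * heat_kernel \<epsilon> (x - y)"
  "exp (\<phi> x / \<epsilon>) * heat_kernel \<epsilon> (x - y)
     \<le> exp (B / \<epsilon>) * (exp (4 * pi\<^sup>2 * real CARD('n) / \<epsilon>) * heat_kernel \<epsilon> (0 :: real^'n))"
proof -
  have "- B / \<epsilon> \<le> \<phi> x / \<epsilon>" "\<phi> x / \<epsilon> \<le> B / \<epsilon>"
    using bounded_\<phi>[of x] eps by (intro divide_right_mono; auto)+
  moreover have "heat_kernel \<epsilon> (0 :: real^'n) / exp (4 * pi\<^sup>2 * real CARD('n) / \<epsilon>) \<le> heat_kernel \<epsilon> (x - y)"
    using heat_kernel_le_exp_mult[OF eps, of 0 "x - y"] by (simp add: field_simps)
  ultimately show "exp (- B / \<epsilon>) * (heat_kernel \<epsilon> (0 :: real^'n) / exp (4 * pi\<^sup>2 * real CARD('n) / \<epsilon>))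
     \<le> exp (\<phi> x / \<epsilon>) * heat_kernel \<epsilon> (x - y)"
    using heat_kernel_pos[OF eps, of "0 :: real^'n"] by (intro mult_mono) auto
  show "exp (\<phi> x / \<epsilon>) * heat_kernel \<epsilon> (x - y)
     \<le> exp (B / \<epsilon>) * (exp (4 * pi\<^sup>2 * real CARD('n) / \<epsilon>) * heat_kernel \<epsilon> (0 :: real^'n))"
    using \<open>\<phi> x / \<epsilon> \<le> B / \<epsilon>\<close> heat_kernel_le_exp_mult[OF eps, of "x - y" 0]
      heat_kernel_pos[OF eps, of "x - y"]
    by (intro mult_mono) auto
qed

lemma integrable_ctrans_integrand: "integrable \<mu> (\<lambda>x. exp (\<phi> x / \<epsilon>) * heat_kernel \<epsilon> (x - y))"
proof (rule integrable_const_bound)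
  show "AE x in \<mu>. norm (exp (\<phi> x / \<epsilon>) * heat_kernel \<epsilon> (x - y))
      \<le> exp (B / \<epsilon>) * (exp (4 * pi\<^sup>2 * real CARD('n) / \<epsilon>) * heat_kernel \<epsilon> (0 :: real^'n))"
    using ctrans_integrand_bounds(2) heat_kernel_pos[OF eps, of "_ - y"] by (simp add: abs_mult abs_of_pos)
qed (use measurable_ctrans_integrand in measurable)

lemma ctrans_integral_pos: "0 < (\<integral>x. exp (\<phi> x / \<epsilon>) * heat_kernel \<epsilon> (x - y) \<partial>\<mu>)"
proof -
  have "exp (- B / \<epsilon>) * (heat_kernel \<epsilon> (0 :: real^'n) / exp (4 * pi\<^sup>2 * real CARD('n) / \<epsilon>))
      \<le> (\<integral>x. exp (\<phi> x / \<epsilon>) * heat_kernel \<epsilon> (x - y) \<partial>\<mu>)"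
    using integral_mono[OF integrable_const integrable_ctrans_integrand ctrans_integrand_bounds(1)]
    by (simp add: prob_space)
  moreover have "0 < exp (- B / \<epsilon>) * (heat_kernel \<epsilon> (0 :: real^'n) / exp (4 * pi\<^sup>2 * real CARD('n) / \<epsilon>))"
    using heat_kernel_pos[OF eps, of "0 :: real^'n"] by simp
  ultimately show ?thesis
    by linarith
qed

lemma ctrans_le_add: "ctrans \<epsilon> \<mu> \<phi> z \<le> ctrans \<epsilon> \<mu> \<phi> y + 4 * pi\<^sup>2 * real CARD('n)"
proof -
  define I where "I w = (\<integral>x. exp (\<phi> x / \<epsilon>) * heat_kernel \<epsilon> (x - w) \<partial>\<mu>)" for w
  have "I y \<le> (\<integral>x. exp (4 * pi\<^sup>2 * real CARD('n) / \<epsilon>) * (exp (\<phi> x / \<epsilon>) * heat_kernel \<epsilon> (x - z)) \<partial>\<mu>)"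
    unfolding I_def
    using heat_kernel_le_exp_mult[OF eps, of "_ - y" "_ - z"]
    by (intro integral_mono integrable_ctrans_integrand integrable_mult_right) (simp add: mult.left_commute)
  also have "\<dots> = exp (4 * pi\<^sup>2 * real CARD('n) / \<epsilon>) * I z"
    unfolding I_def by simp
  finally have "I y \<le> exp (4 * pi\<^sup>2 * real CARD('n) / \<epsilon>) * I z" .
  moreover have pos: "0 < I w" for w
    unfolding I_def by (rule ctrans_integral_pos)
  ultimately have "ln (I y) \<le> ln (exp (4 * pi\<^sup>2 * real CARD('n) / \<epsilon>) * I z)"
    by simp
  also have "\<dots> = 4 * pi\<^sup>2 * real CARD('n) / \<epsilon> + ln (I z)"
    using pos[of z] by (simp add: ln_mult)
  finally have "ln (I y) \<le> 4 * pi\<^sup>2 * real CARD('n) / \<epsilon> + ln (I z)" .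
  then show ?thesis
    unfolding ctrans_eq_ln_integral[OF eps] I_def[symmetric] using eps by (simp add: field_simps)
qed

lemma borel_measurable_ctrans: "ctrans \<epsilon> \<mu> \<phi> \<in> borel_measurable borel"
proof -
  have "(\<lambda>y. \<integral>x. exp (\<phi> x / \<epsilon>) * heat_kernel \<epsilon> (x - y) \<partial>\<mu>) \<in> borel_measurable borel"
    by (rule borel_measurable_lebesgue_integral) (simp add: case_prod_beta')
  then show ?thesis
    unfolding ctrans_eq_ln_integral[OF eps, abs_def] by measurable
qed


end

section \<open>Ratio bounds for tilted densities\<close>

lemma set_integral_bounds:
  fixes f :: "'a \<Rightarrow> real"
  assumes "A \<in> sets M" "emeasure M A < \<infinity>" "f \<in> borel_measurable M"
    and bounds: "\<And>x. x \<in> A \<Longrightarrow> a \<le> f x \<and> f x \<le> b"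
  shows "a * measure M A \<le> (\<integral>x\<in>A. f x \<partial>M) \<and> (\<integral>x\<in>A. f x \<partial>M) \<le> b * measure M A"
proof -
  have const: "set_integrable M A (\<lambda>_. c)" for c :: real
    unfolding set_integrable_def using assms(1,2) by (rule integrable_indicator)
  have "set_integrable M A f"
  proof (rule set_integrable_bound[OF const[of "\<bar>a\<bar> + \<bar>b\<bar>"]])
    show "set_borel_measurable M A f"
      unfolding set_borel_measurable_def using assms(1,3) by measurable
    show "AE x in M. x \<in> A \<longrightarrow> norm (f x) \<le> norm (\<bar>a\<bar> + \<bar>b\<bar>)"
      using bounds by (intro AE_I2) fastforce
  qed
  then have "(\<integral>x\<in>A. a \<partial>M) \<le> (\<integral>x\<in>A. f x \<partial>M)" "(\<integral>x\<in>A. f x \<partial>M) \<le> (\<integral>x\<in>A. b \<partial>M)"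
    using bounds by (intro set_integral_mono const; force)+
  moreover have "(\<integral>x\<in>A. c \<partial>M) = c * measure M A" for c :: real
    using set_integral_const[OF assms(1) less_imp_neq[OF assms(2)], of c] by simp
  ultimately show ?thesis
    by simp
qed

lemma set_integral_ratio_bounds:
  fixes f :: "'a \<Rightarrow> real"
  assumes "A \<in> sets M" "emeasure M A < \<infinity>" "f \<in> borel_measurable M" "y \<in> A" "0 < f y"
    and osc: "\<And>z w. z \<in> A \<Longrightarrow> w \<in> A \<Longrightarrow> f z \<le> exp c * f w"
  shows "exp (- c) * measure M A \<le> (\<integral>z\<in>A. f z \<partial>M) / f y \<and> (\<integral>z\<in>A. f z \<partial>M) / f y \<le> exp c * measure M A"
proof -
  have "exp (- c) * f y \<le> f z \<and> f z \<le> exp c * f y" if "z \<in> A" for z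
    using osc[OF that assms(4)] osc[OF assms(4) that] by (simp add: exp_minus field_simps)
  from set_integral_bounds[OF assms(1-3) this] show ?thesis
    using assms(5) by (simp add: field_simps)
qed

text \<open>If \<open>Q\<close> is a null set, then \<open>Z = 0\<close> and both sides vanish by the convention \<open>x / 0 = 0\<close>.\<close>
lemma tilted_density_ratio_bounds:
  fixes M :: "'a measure" and Q :: "'a set" and G E \<nu> :: "'a \<Rightarrow> real"
  defines "Z \<equiv> \<integral>x\<in>Q. G x \<partial>M"
  assumes Q: "Q \<in> sets M" "emeasure M Q < \<infinity>" "y \<in> Q"
    and G: "G \<in> borel_measurable M" "\<And>z. 0 < G z" "\<And>z w. z \<in> Q \<Longrightarrow> w \<in> Q \<Longrightarrow> G z \<le> exp a * G w"
    and E: "E \<in> borel_measurable M" "\<And>z. 0 < E z" "\<And>z w. z \<in> Q \<Longrightarrow> w \<in> Q \<Longrightarrow> E z \<le> exp b * E w"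
    and \<nu>: "0 \<le> m" "m \<le> \<nu> y" "\<nu> y \<le> m'" "0 \<le> \<nu>Q"
  shows "m * exp (- a - b) * (measure M Q / \<nu>Q)
           \<le> \<nu> y / \<nu>Q / (G y / Z * E y / (\<integral>z\<in>Q. E z * (G z / Z) \<partial>M))
      \<and> \<nu> y / \<nu>Q / (G y / Z * E y / (\<integral>z\<in>Q. E z * (G z / Z) \<partial>M))
           \<le> m' * exp (a + b) * (measure M Q / \<nu>Q)"
proof -
  define vol where "vol = measure M Q"
  define J where "J = (\<integral>z\<in>Q. E z * G z \<partial>M)"
  have Z: "exp (- a) * vol \<le> Z / G y" "Z / G y \<le> exp a * vol"
    using set_integral_ratio_bounds[OF Q(1,2) G(1) Q(3) G(2) G(3)] unfolding Z_def vol_def by auto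
  have "E z * G z \<le> exp (a + b) * (E w * G w)" if "z \<in> Q" "w \<in> Q" for z w
  proof -
    have "E z * G z \<le> (exp b * E w) * (exp a * G w)"
      using E(2)[of w] G(2)[of z] by (intro mult_mono E(3)[OF that] G(3)[OF that]) simp_all
    then show ?thesis
      by (simp add: exp_add mult_ac)
  qed
  moreover have "(\<lambda>z. E z * G z) \<in> borel_measurable M" "0 < E y * G y"
    using E(1,2) G(1,2) by simp_all
  ultimately have J: "exp (- a - b) * vol \<le> J / (E y * G y)" "J / (E y * G y) \<le> exp (a + b) * vol"
    using set_integral_ratio_bounds[OF Q(1,2) _ Q(3), where f = "\<lambda>z. E z * G z" and c = "a + b"]
    unfolding J_def vol_def by auto
  show ?thesis
  proof (cases "vol = 0")
    case True
    then have "Z = 0"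
      using Z G(2)[of y] by (auto simp: zero_le_divide_iff divide_le_0_iff)
    then show ?thesis
      using True by (simp add: vol_def)
  next
    case False
    then have "0 < vol"
      unfolding vol_def using measure_nonneg[of M Q] by linarith
    then have "0 < Z / G y"
      using Z(1) mult_pos_pos[OF exp_gt_zero] by (meson order.strict_trans2)
    then have "0 < Z"
      using G(2)[of y] by (simp add: zero_less_divide_iff)
    then have ratio_eq: "\<nu> y / \<nu>Q / (G y / Z * E y / (\<integral>z\<in>Q. E z * (G z / Z) \<partial>M))
        = \<nu> y / \<nu>Q * (J / (E y * G y))"
      unfolding J_def by (simp add: field_simps)
    have "0 \<le> J / (E y * G y)"
      using \<open>0 < vol\<close> by (intro order_trans[OF _ J(1)]) simp
    have "m / \<nu>Q * (exp (- a - b) * vol) \<le> \<nu> y / \<nu>Q * (J / (E y * G y))"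
      using \<nu> \<open>0 < vol\<close> by (intro mult_mono J(1) divide_right_mono) simp_all
    moreover have "\<nu> y / \<nu>Q * (J / (E y * G y)) \<le> m' / \<nu>Q * (exp (a + b) * vol)"
      using \<nu> \<open>0 \<le> J / (E y * G y)\<close> by (intro mult_mono J(2) divide_right_mono) simp_all
    ultimately show ?thesis
      unfolding ratio_eq vol_def by (simp add: divide_inverse mult_ac)
  qed
qed

text \<open>Only the bounds of \<open>\<nu>\<close> at \<open>y\<close> and the sign of \<open>\<nu>(Q)\<close> enter.\<close>
theorem lemma3p6:
  fixes \<mu> :: "(real^'n) measure" and \<epsilon> \<alpha> R r m\<^sub>\<nu> M\<^sub>\<nu> :: real
    and x0 :: "real^'n" and \<nu> :: "real^'n \<Rightarrow> real"
  assumes mu: "prob_space \<mu>" "sets \<mu> = sets borel"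
    and eps: "\<epsilon> > 0"
    and alpha: "\<alpha> > 0" and R: "R > 0"
    and conv: "torus_strongly_convex_on {x::real^'n. tdist 0 x < R} \<alpha> (\<lambda>x. (tdist 0 x)\<^sup>2)"
    and rR: "r < R"
    and nu_meas: "\<nu> \<in> borel_measurable borel"
    and nu_per: "torus_periodic \<nu>"
    and nu_nonneg: "\<And>x. \<nu> x \<ge> 0"
    and nu_int: "set_integrable lborel torus_cube \<nu>"
    and nu_prob: "(\<integral>x\<in>torus_cube. \<nu> x \<partial>lborel) = 1"
    and m_pos: "0 < m\<^sub>\<nu>" and mM: "m\<^sub>\<nu> \<le> M\<^sub>\<nu>"
    and nu_bounds: "\<And>x. x \<in> tball x0 r \<Longrightarrow> m\<^sub>\<nu> \<le> \<nu> x \<and> \<nu> x \<le> M\<^sub>\<nu>"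
  shows "\<forall>\<phi>. continuous_on UNIV \<phi> \<and> torus_periodic \<phi> \<longrightarrow>
    (\<forall>y\<in>tball x0 r.
      (let Q = tball x0 r;
           d = real CARD('n);
           \<nu>Q = (\<integral>x\<in>Q. \<nu> x \<partial>lborel);
           \<nu>\<^sub>Q = (\<lambda>x. \<nu> x / \<nu>Q);
           Z\<^sub>Q = (\<integral>x\<in>Q. exp (- (tdist x0 x)\<^sup>2 / \<alpha>) \<partial>lborel);
           \<gamma>\<^sub>Q = (\<lambda>x. exp (- (tdist x0 x)\<^sup>2 / \<alpha>) / Z\<^sub>Q);
           T = ctrans \<epsilon> \<mu> \<phi>;
           \<gamma>\<^sub>Q\<phi> = (\<lambda>x. \<gamma>\<^sub>Q x * exp (T x) / (\<integral>z\<in>Q. exp (T z) * \<gamma>\<^sub>Q z \<partial>lborel));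
           volQ = measure lborel Q
       in m\<^sub>\<nu> * exp (- (r\<^sup>2 / \<alpha>) - 4 * pi\<^sup>2 * d) * (volQ / \<nu>Q) \<le> \<nu>\<^sub>Q y / \<gamma>\<^sub>Q\<phi> y
        \<and> \<nu>\<^sub>Q y / \<gamma>\<^sub>Q\<phi> y \<le> M\<^sub>\<nu> * exp (r\<^sup>2 / \<alpha> + 4 * pi\<^sup>2 * d) * (volQ / \<nu>Q)))"
proof (intro allI impI ballI, unfold Let_def, goal_cases)
  case (1 \<phi> y)
  then have \<phi>: "continuous_on UNIV \<phi>" "torus_periodic \<phi>" and y: "y \<in> tball x0 r"
    by auto
  obtain B where B: "\<And>x. \<bar>\<phi> x\<bar> \<le> B"
    using torus_periodic_bounded[OF \<phi>] by blast
  have borel_\<phi>: "\<phi> \<in> borel_measurable borel"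
    using \<phi>(1) by (rule borel_measurable_continuous_onI)
  have [measurable]: "ctrans \<epsilon> \<mu> \<phi> \<in> borel_measurable borel"
    by (rule borel_measurable_ctrans[OF mu eps borel_\<phi> B])
  have E: "exp (ctrans \<epsilon> \<mu> \<phi> z) \<le> exp (4 * pi\<^sup>2 * real CARD('n)) * exp (ctrans \<epsilon> \<mu> \<phi> w)" for z w
    using ctrans_le_add[OF mu eps borel_\<phi> B, of z w] by (simp flip: exp_add)
  have "0 \<le> (\<integral>x\<in>tball x0 r. \<nu> x \<partial>lborel)"
    unfolding set_lebesgue_integral_def using nu_nonneg
    by (intro Bochner_Integration.integral_nonneg_AE AE_I2) (simp add: indicator_def)
  moreover have "tball x0 r \<in> sets lborel"
    by (simp add: tball_in_sets)
  moreover have "(\<lambda>x. exp (- (tdist x0 x)\<^sup>2 / \<alpha>)) \<in> borel_measurable lborel"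
    and "(\<lambda>x. exp (ctrans \<epsilon> \<mu> \<phi> x)) \<in> borel_measurable lborel"
    by measurable
  ultimately show ?case
    using nu_bounds[OF y] m_pos exp_tdist_tball_le[OF alpha]
    by (intro tilted_density_ratio_bounds[OF _ emeasure_tball_finite y _ exp_gt_zero _ _ exp_gt_zero E])
      auto
qed

end
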